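(* Let $n \geq 1$ and let \[ P(z,\bar z) = \sum_{j=0}^n \alpha_{j,n-j} z^j \bar z^{\,n-j} + P_{n-1}(z,\bar z) \] be a polyanalytic polynomial, where $\alpha_{j,n-j}\in\mathbb{C}$ and $P_{n-1}$ is a polyanalytic polynomial with $\deg(P_{n-1}) \leq n-1$. Suppose there exists $\ell \in \{0,1,\ldots,n\}$ with $2\ell \neq n$ such that \[ |\alpha_{\ell,n-\ell}| > \sum_{j=0,\, j\neq \ell}^n |\alpha_{j,n-j}|. \] Then $P$ has at least one zero in $\mathbb{C}$. In particular, every polyanalytic polynomial of the form $P(z,\bar z) = \alpha_{\ell,n-\ell} z^\ell \bar z^{\,n-\ell} + P_{n-1}(z,\bar z)$ with $n\geq 1$, $\alpha_{\ell,n-\ell}\neq 0$, $2\ell\neq n$ and $\deg(P_{n-1})\leq n-1$ has at least one zero.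
   Context: A polyanalytic polynomial is a function $\mathbb{C}\to\mathbb{C}$ of the form $P(z,\bar z)=\sum_{k=0}^n\sum_{j=0}^k \alpha_{j,k-j} z^j \bar z^{\,k-j}$ with complex coefficients $\alpha_{j,k-j}$ (i.e. a polynomial in $z$ and $\bar z$); two such polynomials are equal iff all coefficients agree. Its degree $\deg(P)$ is the largest $j+k$ such that the coefficient of $z^j\bar z^k$ is nonzero. A zero of $P$ is a point $z\in\mathbb{C}$ with $P(z,\bar z)=0$. *)

theory Defs
  imports Complex_Main
begin

text \<open>A polyanalytic polynomial is represented by its coefficient function
  a :: nat => nat => complex, where a j k is the coefficient of z^j (conj z)^k,
  with finite support.\<close>

definition pa_poly :: "(nat \<Rightarrow> nat \<Rightarrow> complex) \<Rightarrow> bool" where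
  "pa_poly a \<longleftrightarrow> finite {(j, k). a j k \<noteq> 0}"

definition pa_eval :: "(nat \<Rightarrow> nat \<Rightarrow> complex) \<Rightarrow> complex \<Rightarrow> complex" where
  "pa_eval a z = (\<Sum>(j, k)\<in>{(j, k). a j k \<noteq> 0}. a j k * z ^ j * cnj z ^ k)"

definition pa_deg_le :: "(nat \<Rightarrow> nat \<Rightarrow> complex) \<Rightarrow> nat \<Rightarrow> bool" where
  "pa_deg_le a d \<longleftrightarrow> (\<forall>j k. a j k \<noteq> 0 \<longrightarrow> j + k \<le> d)"

end

theory Submission
  imports Defs "HOL-Analysis.Analysis"
begin

text \<open>If P had no zero, then P = exp \<circ> g for a continuous g, since \<complex> is contractible.
  On a large circle |z| = R the dominant monomial h z = \<alpha>_l z^l (conj z)^(n-l) satisfies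
  |P z - h z| < |h z|, so P / h takes values in the right half-plane, where Ln is continuous;
  hence h has a continuous logarithm on that circle too. But there conj z = R^2 / z, so h is a
  nonzero multiple of z^(2l-n), and a nonzero power of z has no continuous logarithm on a circle
  because the identity of the circle is not nullhomotopic.\<close>

lemma no_continuous_logarithm_id_sphere:
  assumes "continuous_on (sphere (0::complex) 1) g" "\<And>z. z \<in> sphere 0 1 \<Longrightarrow> z = exp (g z)"
  shows False
proof -
  obtain a where "homotopic_with_canon (\<lambda>h. True) (sphere (0::complex) 1) (-{0}) id (\<lambda>t. a)"
    using inessential_eq_continuous_logarithm[of "sphere 0 1" id] assms by auto
  then have "homotopic_with_canon (\<lambda>h. True) (sphere (0::complex) 1) (sphere 0 1)
      ((\<lambda>z. z / of_real (norm z)) \<circ> id) ((\<lambda>z. z / of_real (norm z)) \<circ> (\<lambda>t. a))"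
    by (rule homotopic_with_compose_continuous_left)
       (auto intro!: continuous_intros simp: norm_divide)
  then have "homotopic_with_canon (\<lambda>h. True) (sphere (0::complex) 1) (sphere 0 1) id (\<lambda>t. a / of_real (norm a))"
    by (rule homotopic_with_eq) auto
  then have "contractible (sphere (0::complex) 1)"
    unfolding contractible_def by blast
  then show False
    by (simp add: contractible_sphere)
qed

lemma no_continuous_logarithm_power_sphere:
  assumes "k > 0" "continuous_on (sphere (0::complex) 1) g"
    and "\<And>z. z \<in> sphere 0 1 \<Longrightarrow> z ^ k = exp (g z)"
  shows False
proof -
  define f where "f z = exp (g z / of_nat k) / z" for z
  have cont_f: "continuous_on (sphere 0 1) f"
    unfolding f_def using assms(1,2) by (auto intro!: continuous_intros)
  have "f z ^ k = 1" if "z \<in> sphere 0 1" for z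
  proof -
    have "exp (g z / of_nat k) ^ k = exp (g z)"
      using assms(1) by (simp flip: exp_of_nat_mult)
    then show ?thesis
      using assms(3)[OF that] that by (auto simp: f_def power_divide)
  qed
  then have "finite (f ` sphere 0 1)"
    using assms(1) by (intro finite_subset[OF _ finite_roots_unity[of k]]) auto
  then have "f constant_on sphere 0 1"
    by (intro continuous_finite_range_constant cont_f connected_sphere) auto
  then obtain c where c: "\<And>z. z \<in> sphere 0 1 \<Longrightarrow> f z = c"
    by (auto simp: constant_on_def)
  have "c \<noteq> 0"
    using c[of 1] by (auto simp: f_def)
  show False
  proof (rule no_continuous_logarithm_id_sphere)
    show "continuous_on (sphere 0 1) (\<lambda>z. g z / of_nat k - Ln c)"
      using assms(1,2) by (auto intro!: continuous_intros)
    fix z :: complex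
    assume z: "z \<in> sphere 0 1"
    then have "z = exp (g z / of_nat k) / c"
      using c[OF z] \<open>c \<noteq> 0\<close> by (auto simp: f_def field_simps)
    then show "z = exp (g z / of_nat k - Ln c)"
      using \<open>c \<noteq> 0\<close> by (simp add: exp_diff)
  qed
qed

lemma no_continuous_logarithm_powi_sphere:
  fixes k :: int and c :: complex
  assumes "k \<noteq> 0" "r > 0" "c \<noteq> 0" "continuous_on (sphere 0 r) g"
    and "\<And>z. z \<in> sphere 0 r \<Longrightarrow> c * z powi k = exp (g z)"
  shows False
proof -
  define h where "h u = g (of_real r * u) - Ln (c * of_real r powi k)" for u
  have cont_h: "continuous_on (sphere 0 1) h"
    unfolding h_def using assms(2)
    by (intro continuous_intros continuous_on_compose2[OF assms(4)]) (auto simp: norm_mult)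
  have h: "u powi k = exp (h u)" if "u \<in> sphere 0 1" for u
  proof -
    have "c * (of_real r * u) powi k = exp (g (of_real r * u))"
      using assms(2) that by (intro assms(5)) (simp add: norm_mult)
    then have "c * of_real r powi k * u powi k = exp (g (of_real r * u))"
      by (simp add: power_int_mult_distrib mult.assoc)
    then show ?thesis
      using assms(2,3) by (simp add: h_def exp_diff field_simps)
  qed
  show False
  proof (cases "k > 0")
    case True
    then show False
      using h by (intro no_continuous_logarithm_power_sphere[OF _ cont_h, of "nat k"])
        (auto simp: power_int_nonneg_exp)
  next
    case False
    with assms(1) have "k = - int (nat (- k))" "nat (- k) > 0"
      by auto
    then have "u ^ nat (- k) = exp (- h u)" if "u \<in> sphere 0 1" for u
      using h[OF that] by (metis exp_minus inverse_inverse_eq power_int_minus power_int_of_nat)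
    then show False
      using \<open>nat (- k) > 0\<close> cont_h
      by (intro no_continuous_logarithm_power_sphere[of "nat (- k)" "\<lambda>u. - h u"])
         (auto intro: continuous_intros)
  qed
qed

lemma continuous_logarithm_dominated:
  fixes g h :: "'a::topological_space \<Rightarrow> complex"
  assumes "continuous_on S g" "continuous_on S h"
    and "\<And>z. z \<in> S \<Longrightarrow> norm (exp (g z) - h z) < norm (h z)"
  obtains g' where "continuous_on S g'" "\<And>z. z \<in> S \<Longrightarrow> h z = exp (g' z)"
proof
  define q where "q z = exp (g z) / h z" for z
  have h0: "h z \<noteq> 0" if "z \<in> S" for z
    using assms(3)[OF that] by auto
  have Re_q: "Re (q z) > 0" if "z \<in> S" for z
  proof -
    have "norm (q z - 1) < 1"
      using assms(3)[OF that] h0[OF that]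
      by (simp add: q_def norm_divide divide_simps flip: norm_minus_commute)
    then show ?thesis
      using abs_Re_le_cmod[of "q z - 1"] by simp
  qed
  have q_nonpos: "q z \<notin> \<real>\<^sub>\<le>\<^sub>0" if "z \<in> S" for z
    using Re_q[OF that] by (auto simp: nonpos_Reals_def complex_is_Real_iff)
  then show "continuous_on S (\<lambda>z. g z - Ln (q z))"
    unfolding q_def using assms(1,2) h0 by (intro continuous_intros) auto
  show "h z = exp (g z - Ln (q z))" if "z \<in> S" for z
    using that h0[OF that] q_nonpos[OF that]
    by (auto simp: exp_diff q_def)
qed

lemma continuous_on_pa_eval [continuous_intros]: "continuous_on S (pa_eval Q)"
  unfolding pa_eval_def split_beta by (intro continuous_intros)

lemma norm_pa_eval_le:
  assumes "pa_deg_le Q d" "norm z \<ge> 1"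
  shows "norm (pa_eval Q z) \<le> (\<Sum>(j, k)\<in>{(j, k). Q j k \<noteq> 0}. norm (Q j k)) * norm z ^ d"
proof -
  have "norm (pa_eval Q z) \<le> (\<Sum>(j, k)\<in>{(j, k). Q j k \<noteq> 0}. norm (Q j k * z ^ j * cnj z ^ k))"
    unfolding pa_eval_def split_beta by (rule norm_sum)
  also have "\<dots> \<le> (\<Sum>(j, k)\<in>{(j, k). Q j k \<noteq> 0}. norm (Q j k) * norm z ^ d)"
  proof (rule sum_mono, clarify)
    fix j k
    assume "Q j k \<noteq> 0"
    then have "norm z ^ (j + k) \<le> norm z ^ d"
      using assms by (intro power_increasing) (auto simp: pa_deg_le_def)
    then show "norm (Q j k * z ^ j * cnj z ^ k) \<le> norm (Q j k) * norm z ^ d"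
      by (simp add: norm_mult norm_power power_add mult.assoc mult_left_mono)
  qed
  also have "\<dots> = (\<Sum>(j, k)\<in>{(j, k). Q j k \<noteq> 0}. norm (Q j k)) * norm z ^ d"
    by (simp add: sum_distrib_right split_beta)
  finally show ?thesis .
qed

lemma power_cnj_power_on_circle:
  fixes z :: complex
  assumes "norm z = r" "r > 0"
  shows "z ^ j * cnj z ^ k = of_real (r ^ (2 * k)) * z powi (int j - int k)"
proof -
  have "z \<noteq> 0"
    using assms by auto
  have "cnj z = of_real r ^ 2 / z"
    using assms complex_norm_square[of z] \<open>z \<noteq> 0\<close> by (simp add: field_simps)
  then have "z ^ j * cnj z ^ k = z ^ j * (of_real r ^ 2 / z) ^ k"
    by simp
  also have "\<dots> = of_real (r ^ (2 * k)) * z powi (int j - int k)"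
    using \<open>z \<noteq> 0\<close> by (simp add: power_int_diff power_divide power_mult)
  finally show ?thesis .
qed

lemma dominant_monomial_on_large_circle:
  fixes \<alpha> :: "nat \<Rightarrow> complex" and Q :: "nat \<Rightarrow> nat \<Rightarrow> complex"
  assumes "pa_deg_le Q (n - 1)" "n \<ge> 1" "l \<le> n"
    and "norm (\<alpha> l) > (\<Sum>j\<in>{0..n} - {l}. norm (\<alpha> j))"
  obtains R where "R > 0"
    "\<And>z. norm z = R \<Longrightarrow>
       norm ((\<Sum>j=0..n. \<alpha> j * z ^ j * cnj z ^ (n - j)) + pa_eval Q z - \<alpha> l * z ^ l * cnj z ^ (n - l))
       < norm (\<alpha> l * z ^ l * cnj z ^ (n - l))"
proof
  define S where "S = (\<Sum>j\<in>{0..n} - {l}. norm (\<alpha> j))"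
  define C where "C = (\<Sum>(j, k)\<in>{(j, k). Q j k \<noteq> 0}. norm (Q j k))"
  define R where "R = max 1 (C / (norm (\<alpha> l) - S) + 1)"
  have "S < norm (\<alpha> l)"
    using assms(4) by (simp add: S_def)
  moreover have "C / (norm (\<alpha> l) - S) < R"
    by (simp add: R_def)
  ultimately have "C < (norm (\<alpha> l) - S) * R"
    by (simp add: field_simps)
  have "R \<ge> 1"
    by (simp add: R_def)
  then show "R > 0"
    by simp
  fix z :: complex
  assume z: "norm z = R"
  define E where "E = (\<Sum>j\<in>{0..n} - {l}. \<alpha> j * z ^ j * cnj z ^ (n - j))"
  have monomial: "norm (c * z ^ j * cnj z ^ (n - j)) = norm c * R ^ n" if "j \<le> n" for c j
    using that z by (simp add: norm_mult norm_power flip: power_add)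
  have "norm E \<le> (\<Sum>j\<in>{0..n} - {l}. norm (\<alpha> j * z ^ j * cnj z ^ (n - j)))"
    unfolding E_def by (rule norm_sum)
  also have "\<dots> = S * R ^ n"
    by (simp add: S_def monomial sum_distrib_right)
  finally have "norm E \<le> S * R ^ n" .
  moreover have "norm (pa_eval Q z) \<le> C * R ^ (n - 1)"
    using norm_pa_eval_le[OF assms(1), of z] z \<open>R \<ge> 1\<close> by (simp add: C_def)
  moreover have "C * R ^ (n - 1) < (norm (\<alpha> l) - S) * R ^ n"
  proof -
    have "R ^ n = R * R ^ (n - 1)"
      using assms(2) by (cases n) auto
    then show ?thesis
      using \<open>C < (norm (\<alpha> l) - S) * R\<close> \<open>R \<ge> 1\<close> by (simp add: mult.assoc[symmetric])
  qed
  ultimately have "norm E + norm (pa_eval Q z) < norm (\<alpha> l) * R ^ n"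
    by (simp add: algebra_simps)
  have "norm ((\<Sum>j=0..n. \<alpha> j * z ^ j * cnj z ^ (n - j)) + pa_eval Q z - \<alpha> l * z ^ l * cnj z ^ (n - l))
      = norm (E + pa_eval Q z)"
    using assms(3) by (simp add: E_def sum.remove[of "{0..n}" l])
  also have "\<dots> \<le> norm E + norm (pa_eval Q z)"
    by (rule norm_triangle_ineq)
  also have "\<dots> < norm (\<alpha> l) * R ^ n"
    by fact
  also have "\<dots> = norm (\<alpha> l * z ^ l * cnj z ^ (n - l))"
    using monomial[OF assms(3)] by simp
  finally show "norm ((\<Sum>j=0..n. \<alpha> j * z ^ j * cnj z ^ (n - j)) + pa_eval Q z - \<alpha> l * z ^ l * cnj z ^ (n - l))
      < norm (\<alpha> l * z ^ l * cnj z ^ (n - l))" .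
qed

theorem theorem2p5:
  fixes n l :: nat and \<alpha> :: "nat \<Rightarrow> complex" and Q :: "nat \<Rightarrow> nat \<Rightarrow> complex"
  assumes "n \<ge> 1"
    and "pa_poly Q" and "pa_deg_le Q (n - 1)"
    and "l \<le> n" and "2 * l \<noteq> n"
    and "norm (\<alpha> l) > (\<Sum>j\<in>{0..n} - {l}. norm (\<alpha> j))"
  shows "\<exists>z::complex. (\<Sum>j=0..n. \<alpha> j * z ^ j * cnj z ^ (n - j)) + pa_eval Q z = 0"
proof (rule ccontr)
  define P where "P z = (\<Sum>j=0..n. \<alpha> j * z ^ j * cnj z ^ (n - j)) + pa_eval Q z" for z
  define h where "h z = \<alpha> l * z ^ l * cnj z ^ (n - l)" for z
  assume "\<not> ?thesis"
  then have P_nonzero: "\<And>z. P z \<noteq> 0"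
    by (simp add: P_def)
  have "continuous_on UNIV P"
    unfolding P_def by (intro continuous_intros)
  then obtain g where g: "continuous_on UNIV g" "\<And>z. P z = exp (g z)"
    by (rule continuous_logarithm_on_contractible[OF _ contractible_UNIV P_nonzero]) blast
  obtain R where "R > 0" and "\<And>z. norm z = R \<Longrightarrow> norm (P z - h z) < norm (h z)"
    using dominant_monomial_on_large_circle[OF assms(3,1,4,6)] unfolding P_def h_def by blast
  then have dominant: "\<And>z. z \<in> sphere 0 R \<Longrightarrow> norm (exp (g z) - h z) < norm (h z)"
    by (simp add: g(2))
  have "continuous_on (sphere 0 R) h"
    unfolding h_def by (intro continuous_intros)
  then obtain g' where g': "continuous_on (sphere 0 R) g'" "\<And>z. z \<in> sphere 0 R \<Longrightarrow> h z = exp (g' z)"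
    using continuous_logarithm_dominated[OF continuous_on_subset[OF g(1)] _ dominant] by blast
  define k where "k = int l - int (n - l)"
  define c where "c = \<alpha> l * of_real (R ^ (2 * (n - l)))"
  have "h z = c * z powi k" if "z \<in> sphere 0 R" for z
    using that \<open>R > 0\<close> by (simp add: h_def c_def k_def power_cnj_power_on_circle mult.assoc)
  moreover have "c \<noteq> 0"
    using assms(6) sum_nonneg[of "{0..n} - {l}" "\<lambda>j. norm (\<alpha> j)"] \<open>R > 0\<close> by (auto simp: c_def)
  moreover have "k \<noteq> 0"
    using assms(4,5) by (simp add: k_def)
  ultimately show False
    using no_continuous_logarithm_powi_sphere[OF _ \<open>R > 0\<close> _ g'(1)] g'(2) by metis
qed

end
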